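(* For the merging problem with $n$ items and $k$ slots, suppose $2k\le n$ and the ad values $a_1,\dots,a_n$ are i.i.d. with a common (regular) distribution $G$ supported on $[0,\infty)$, and $o_i\ge 0$. Then the G-FIX mechanism is $\binom{n-k}{k}/\binom{n}{k}$-approximate: $\mathrm{OBJ}(\mathcal M^F)\ge \frac{\binom{n-k}{k}}{\binom{n}{k}}\mathrm{OBJ}(\mathcal M^* )$.
   Context: Merging problem: $n$ items indexed by $[n]$, $k\le n$ slots. Each item $i$ has a random ad value $a_i$, drawn independently from a regular distribution $G_i$ ($\boldsymbol a\sim G=\times_i G_i$), and a fixed organic value $o_i\ge0$. A mechanism is a pair of allocation rules $x,y$ with $x_i(\boldsymbol a),y_i(\boldsymbol a)\in\{0,1\}$ ($x_i=1$: item $i$ shown as ad; $y_i=1$: shown organically) satisfying for all $\boldsymbol a,i$: (i) $\sum_i(x_i+y_i)\le k$; (ii) $x_i+y_i\le 1$; (iii) $y_i(a_i,\boldsymbol a_{-i})$ independent of $a_i$; (iv) $x_i(a_i,\boldsymbol a_{-i})$ non-decreasing in $a_i$. Objective $\mathrm{OBJ}=\mathbb E_{\boldsymbol a\sim G}[\sum_i(a_ix_i(\boldsymbol a)+o_iy_i(\boldsymbol a))]$; $\mathcal M^*$ maximizes it subject to (i)–(iv). A mechanism $\mathcal M$ is $\tau$-approximate if $\mathrm{OBJ}(\mathcal M)/\mathrm{OBJ}(\mathcal M^* )\ge\tau$. Notation: for a finite multiset $S$ of reals and $k\le|S|$, $\max^{(k)}S$ is the sum of the $k$ largest elements of $S$.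 G-FIX-$I$ mechanism $\mathcal M^F_I$ for $I\subseteq[n]$: items in $I$ may only be shown in organic form and items outside $I$ only as ads; with $L=\{o_i:i\in I\}\cup\{a_i:i\in[n]\setminus I\}$, it displays (in the designated forms) the $k$ items with the largest values in $L$, i.e. $x_i(\boldsymbol a)=1$ iff $i\notin I$ and $a_i>\max^{(k+1)}L-\max^{(k)}L$, $y_i(\boldsymbol a)=1$ iff $i\in I$ and $o_i>\max^{(k+1)}L-\max^{(k)}L$. Its objective is $\mathrm{OBJ}(\mathcal M_I^F)=\mathbb E_{\boldsymbol a\sim G}[\max^{(k)}L]$. The G-FIX mechanism $\mathcal M^F$ runs the $\mathcal M^F_I$ with the highest objective among all $I\subseteq[n]$ with $|I|\le k$, so $\mathrm{OBJ}(\mathcal M^F)=\max_{I\subseteq[n],|I|\le k}\mathrm{OBJ}(\mathcal M^F_I)$. *)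

theory Defs
  imports "HOL-Probability.Probability" "HOL-Library.Multiset"
begin

(* Items are indexed by {..<n} (i.e. [n] shifted to 0-based). *)

definition profile_measure :: "nat \<Rightarrow> real measure \<Rightarrow> (nat \<Rightarrow> real) measure" where
  "profile_measure n G = PiM {..<n} (\<lambda>_. G)"

definition max_k :: "nat \<Rightarrow> real multiset \<Rightarrow> real" where
  "max_k k S = sum_list (take k (rev (sorted_list_of_multiset S)))"

definition regular_dist :: "real measure \<Rightarrow> bool" where
  "regular_dist G \<longleftrightarrow> prob_space G \<and>
     (\<exists>f S. f \<in> borel_measurable borel \<and> G = density lborel (\<lambda>v. ennreal (f v)) \<and>
        is_interval S \<and> S \<subseteq> {0..} \<and>
        (\<forall>v\<in>S. f v > 0) \<and> (\<forall>v. v \<notin> S \<longrightarrow> f v = 0) \<and>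
        mono_on S (\<lambda>v. v - (1 - measure G {..v}) / f v))"

(* Feasible mechanism (x, y): x a i = True iff item i is shown as an ad under profile a,
   y a i = True iff shown organically. Constraints (i)-(iv) hold for every profile a;
   in addition the allocation events are required to be measurable, so that the
   objective (an expectation) is meaningful. *)
definition feasible_mech ::
  "nat \<Rightarrow> nat \<Rightarrow> real measure \<Rightarrow> ((nat \<Rightarrow> real) \<Rightarrow> nat \<Rightarrow> bool) \<Rightarrow> ((nat \<Rightarrow> real) \<Rightarrow> nat \<Rightarrow> bool) \<Rightarrow> bool" where
  "feasible_mech n k G x y \<longleftrightarrow>
     (\<forall>a \<in> PiE {..<n} (\<lambda>_. UNIV).
        card {i\<in>{..<n}. x a i} + card {i\<in>{..<n}. y a i} \<le> k \<and>
        (\<forall>i<n. \<not> (x a i \<and> y a i)) \<and>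
        (\<forall>i<n. \<forall>t. y (a(i := t)) i = y a i) \<and>
        (\<forall>i<n. \<forall>t t'. t \<le> t' \<longrightarrow> x (a(i := t)) i \<longrightarrow> x (a(i := t')) i)) \<and>
     (\<forall>i<n. {a \<in> space (profile_measure n G). x a i} \<in> sets (profile_measure n G) \<and>
            {a \<in> space (profile_measure n G). y a i} \<in> sets (profile_measure n G))"

definition mech_obj ::
  "nat \<Rightarrow> real measure \<Rightarrow> (nat \<Rightarrow> real) \<Rightarrow> ((nat \<Rightarrow> real) \<Rightarrow> nat \<Rightarrow> bool) \<Rightarrow> ((nat \<Rightarrow> real) \<Rightarrow> nat \<Rightarrow> bool) \<Rightarrow> ennreal" where
  "mech_obj n G ov x y =
     (\<integral>\<^sup>+ a. ennreal (\<Sum>i<n. (if x a i then a i else 0) + (if y a i then ov i else 0))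
        \<partial>profile_measure n G)"

definition fix_obj :: "nat \<Rightarrow> nat \<Rightarrow> real measure \<Rightarrow> (nat \<Rightarrow> real) \<Rightarrow> nat set \<Rightarrow> ennreal" where
  "fix_obj n k G ov I =
     (\<integral>\<^sup>+ a. ennreal (max_k k (image_mset (\<lambda>i. if i \<in> I then ov i else a i) (mset_set {..<n})))
        \<partial>profile_measure n G)"

definition gfix_obj :: "nat \<Rightarrow> nat \<Rightarrow> real measure \<Rightarrow> (nat \<Rightarrow> real) \<Rightarrow> ennreal" where
  "gfix_obj n k G ov = Max (fix_obj n k G ov ` {I. I \<subseteq> {..<n} \<and> card I \<le> k})"

end

theory Submission
  imports Defs
begin

text \<open>Let T consist of k items of largest organic value and compare an arbitrary feasible mechanism
  with G-FIX-T, profile by profile. If the mechanism shows the ads X and the organic items Y, the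
  organic part is dominated by a subset U of T with at most |Y| elements. Rotating the profile
  cyclically by s, the positions outside T that read an ad of X, together with U, form at most k
  items displayable by G-FIX-T; summing over all n rotations collects every ad of X exactly n - k
  times. The ad values are i.i.d., so rotation preserves the product measure, and therefore
  (n - k)/n OBJ(M) \<le> OBJ(G-FIX-T). It remains that C(n-k,k)/C(n,k) \<le> (n-k)/n. Of the
  hypotheses only k \<le> n and the non-negativity of ad and organic values are needed; regularity
  of G enters only through its support lying in [0,\<infinity>).\<close>

lemma max_k_add_mset_Max:
  assumes "\<And>y. y \<in># M \<Longrightarrow> y \<le> x"
  shows "max_k (Suc k) (add_mset x M) = x + max_k k M"
  using assms unfolding max_k_def by (simp add: sorted_insort_is_snoc)

lemma sum_mset_le_max_k:
  fixes M N :: "real multiset"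
  assumes "N \<subseteq># M"
  shows "sum_mset N \<le> max_k (size N) M"
  using assms
proof (induction "size N" arbitrary: M N)
  case 0
  then show ?case by (simp add: max_k_def)
next
  case (Suc k)
  then have "N \<noteq> {#}" by auto
  then obtain y where y: "y \<in># N" by blast
  define x where "x = Max_mset M"
  have "M \<noteq> {#}" using Suc.prems y by auto
  then have xM: "x \<in># M" and x_max: "\<And>z. z \<in># M \<Longrightarrow> z \<le> x"
    unfolding x_def by simp_all
  define z where "z = (if x \<in># N then x else y)"
  have zN: "z \<in># N" using y z_def by simp
  have "N - {#x#} \<subseteq># M - {#x#}" using Suc.prems xM by (simp add: subset_eq_diff_conv)
  moreover have "N - {#z#} \<subseteq># N - {#x#}"
    unfolding z_def by (simp add: diff_single_trivial)
  ultimately have "N - {#z#} \<subseteq># M - {#x#}" by (rule subset_mset.order_trans[rotated])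
  moreover have "k = size (N - {#z#})" using zN Suc.hyps(2) by (simp add: size_Diff_singleton)
  ultimately have IH: "sum_mset (N - {#z#}) \<le> max_k k (M - {#x#})"
    using Suc.hyps(1) by blast
  have "z \<le> x" using zN Suc.prems x_max by (meson mset_subset_eqD)
  have "sum_mset N = z + sum_mset (N - {#z#})" using zN by (rule sum_mset.remove)
  also have "\<dots> \<le> x + max_k k (M - {#x#})" using IH \<open>z \<le> x\<close> by simp
  also have "\<dots> = max_k (size N) M"
    using max_k_add_mset_Max[of "M - {#x#}" x k] x_max xM Suc.hyps(2) by (simp add: in_diffD)
  finally show ?case .
qed

lemma sum_le_max_k:
  fixes f :: "'a \<Rightarrow> real"
  assumes "finite A" "S \<subseteq> A"
  shows "sum f S \<le> max_k (card S) (image_mset f (mset_set A))"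
proof -
  have "image_mset f (mset_set S) \<subseteq># image_mset f (mset_set A)"
    using assms by (intro image_mset_subseteq_mono subset_imp_msubset_mset_set)
  then show ?thesis using sum_mset_le_max_k by (fastforce simp: sum_unfold_sum_mset)
qed

text \<open>A lower bound for max_k (in fact equal to it) that is evidently measurable, being a maximum
  of finitely many sums.\<close>

definition max_subset_sum :: "nat \<Rightarrow> 'a set \<Rightarrow> ('a \<Rightarrow> real) \<Rightarrow> real" where
  "max_subset_sum k A f = Max (sum f ` {S. S \<subseteq> A \<and> card S = k})"

lemma max_subset_sum_le_max_k:
  assumes "finite A" "k \<le> card A"
  shows "max_subset_sum k A f \<le> max_k k (image_mset f (mset_set A))"
proof -
  have "sum f S \<le> max_k k (image_mset f (mset_set A))" if "S \<subseteq> A" "card S = k" for S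
    using sum_le_max_k[OF assms(1) that(1)] that(2) by simp
  moreover obtain S where "S \<subseteq> A" "card S = k" using obtain_subset_with_card_n assms(2) by metis
  ultimately show ?thesis unfolding max_subset_sum_def using assms(1)
    by (subst Max_le_iff) auto
qed

lemma sum_le_max_subset_sum:
  assumes "finite A" "Q \<subseteq> A" "card Q \<le> k" "k \<le> card A" and nonneg: "\<And>i. i \<in> A \<Longrightarrow> 0 \<le> f i"
  shows "sum f Q \<le> max_subset_sum k A f"
proof -
  obtain S where S: "Q \<subseteq> S" "S \<subseteq> A" "card S = k"
    using exists_subset_between assms(1-4) by metis
  have "sum f Q \<le> sum f S"
    using S nonneg assms(1) by (intro sum_mono2) (auto intro: finite_subset)
  also have "\<dots> \<le> max_subset_sum k A f"
    unfolding max_subset_sum_def using S assms(1) by (intro Max_ge) auto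
  finally show ?thesis .
qed

lemma borel_measurable_max_subset_sum:
  assumes "finite A" "\<And>i. i \<in> A \<Longrightarrow> (\<lambda>x. f x i) \<in> borel_measurable M"
  shows "(\<lambda>x. max_subset_sum k A (f x)) \<in> borel_measurable M"
  unfolding max_subset_sum_def using assms
  by (intro borel_measurable_Max borel_measurable_sum) auto

definition top_subset :: "nat \<Rightarrow> 'a set \<Rightarrow> ('a \<Rightarrow> real) \<Rightarrow> 'a set \<Rightarrow> bool" where
  "top_subset k A f T \<longleftrightarrow> T \<subseteq> A \<and> card T = k \<and> (\<forall>t\<in>T. \<forall>i\<in>A - T. f i \<le> f t)"

lemma ex_top_subset:
  fixes f :: "'a \<Rightarrow> real"
  assumes "finite A" "k \<le> card A"
  obtains T where "top_subset k A f T"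
proof -
  define SS where "SS = {S. S \<subseteq> A \<and> card S = k}"
  have "finite SS" "SS \<noteq> {}"
    using assms obtain_subset_with_card_n[OF assms(2)] by (auto simp: SS_def)
  then have "Max (sum f ` SS) \<in> sum f ` SS" by (intro Max_in) auto
  then obtain T where T: "T \<in> SS" "sum f T = Max (sum f ` SS)" by auto
  with \<open>finite SS\<close> have T_max: "\<And>S. S \<in> SS \<Longrightarrow> sum f S \<le> sum f T" by simp
  have fin: "finite T" using T(1) assms(1) by (auto simp: SS_def intro: finite_subset)
  have "f i \<le> f t" if t: "t \<in> T" and i: "i \<in> A - T" for t i
  proof -
    have "0 < card T" using t fin by (auto simp: card_gt_0_iff)
    then have "insert i (T - {t}) \<in> SS"
      using T t i fin by (auto simp: SS_def card_Diff_singleton)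
    then have "sum f (insert i (T - {t})) \<le> sum f T" by (rule T_max)
    then show ?thesis using t i fin by (simp add: sum.remove)
  qed
  then have "top_subset k A f T" using T(1) by (auto simp: top_subset_def SS_def)
  then show ?thesis by (rule that)
qed

lemma sum_le_sum_top_subset:
  fixes f :: "'a \<Rightarrow> real"
  assumes "finite A" "top_subset k A f T" "Y \<subseteq> A" "card Y \<le> k"
  obtains U where "U \<subseteq> T" "card U \<le> card Y" "sum f Y \<le> sum f U"
proof -
  have T: "T \<subseteq> A" "card T = k" and top: "\<And>t i. t \<in> T \<Longrightarrow> i \<in> A - T \<Longrightarrow> f i \<le> f t"
    using assms(2) by (auto simp: top_subset_def)
  have fin: "finite T" "finite Y" using assms(1,3) T(1) finite_subset by auto
  then have "card (Y - T) \<le> card (T - Y)"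
    using card_Int_Diff[of Y T] card_Int_Diff[of T Y] assms(4) T(2) by (simp add: Int_commute)
  then obtain \<phi> where \<phi>: "\<phi> ` (Y - T) \<subseteq> T - Y" "inj_on \<phi> (Y - T)"
    using card_le_inj[of "Y - T" "T - Y"] fin by auto
  define U where "U = (Y \<inter> T) \<union> \<phi> ` (Y - T)"
  show ?thesis
  proof
    show "U \<subseteq> T" unfolding U_def using \<phi> by auto
    have "card U \<le> card (Y \<inter> T) + card (\<phi> ` (Y - T))" unfolding U_def by (rule card_Un_le)
    also have "\<dots> = card Y" using \<phi>(2) fin card_Int_Diff[of Y T] by (simp add: card_image)
    finally show "card U \<le> card Y" .
    have "sum f Y = sum f (Y \<inter> T) + sum f (Y - T)" using fin(2) by (rule sum.Int_Diff)
    also have "sum f (Y - T) \<le> sum (f \<circ> \<phi>) (Y - T)"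
      using top \<phi>(1) assms(3) by (intro sum_mono) auto
    also have "\<dots> = sum f (\<phi> ` (Y - T))" using \<phi>(2) by (simp add: sum.reindex)
    also have "sum f (Y \<inter> T) + sum f (\<phi> ` (Y - T)) = sum f U"
      unfolding U_def using \<phi>(1) fin by (intro sum.union_disjoint[symmetric]) auto
    finally show "sum f Y \<le> sum f U" by simp
  qed
qed

lemma inj_on_rotate: "inj_on (\<lambda>j. (j + s) mod n) {..<n::nat}"
proof (rule inj_onI)
  fix i j assume "i \<in> {..<n}" "j \<in> {..<n}" and "(i + s) mod n = (j + s) mod n"
  then obtain q q' where "i + s + n * q = j + s + n * q'"
    using nat_mod_eq_iff[of "i + s" n "j + s"] by blast
  then have "i mod n = j mod n" using nat_mod_eq_iff by auto
  with \<open>i \<in> {..<n}\<close> \<open>j \<in> {..<n}\<close> show "i = j" by simp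
qed

lemma bij_betw_rotate: "bij_betw (\<lambda>j. (j + s) mod n) {..<n::nat} {..<n}"
proof -
  have "(\<lambda>j. (j + s) mod n) ` {..<n} \<subseteq> {..<n}"
  proof (rule image_subsetI)
    fix j assume "j \<in> {..<n}"
    then have "0 < n" by simp
    then show "(j + s) mod n \<in> {..<n}" by simp
  qed
  then show ?thesis
    using inj_on_rotate endo_inj_surj[of "{..<n}"] by (simp add: bij_betw_def)
qed

lemma sum_rotate: "(\<Sum>s<n. g ((j + s) mod n)) = (\<Sum>i<n::nat. g i)"
proof -
  have "(\<Sum>s<n. g ((s + j) mod n)) = (\<Sum>i<n. g i)"
    by (rule sum.reindex_bij_betw[OF bij_betw_rotate])
  then show ?thesis by (simp add: add.commute)
qed

definition fix_values :: "'a set \<Rightarrow> ('a \<Rightarrow> 'b) \<Rightarrow> ('a \<Rightarrow> 'b) \<Rightarrow> 'a \<Rightarrow> 'b" where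
  "fix_values I ov a = (\<lambda>i. if i \<in> I then ov i else a i)"

definition rotate_profile :: "nat \<Rightarrow> nat \<Rightarrow> (nat \<Rightarrow> 'a) \<Rightarrow> nat \<Rightarrow> 'a" where
  "rotate_profile n s a = (\<lambda>j\<in>{..<n}. a ((j + s) mod n))"

lemma rotated_allocation_le_max_subset_sum:
  fixes a ov :: "nat \<Rightarrow> real"
  assumes "k \<le> n" "U \<subseteq> T" "T \<subseteq> {..<n}" "X \<subseteq> {..<n}" "card U + card X \<le> k"
    and ov: "\<forall>i<n. 0 \<le> ov i" and a: "\<forall>i<n. 0 \<le> a i"
  shows "sum ov U + (\<Sum>j\<in>{..<n} - T. if (j + s) mod n \<in> X then a ((j + s) mod n) else 0)
           \<le> max_subset_sum k {..<n} (fix_values T ov (rotate_profile n s a))"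
proof -
  define c where "c = fix_values T ov (rotate_profile n s a)"
  define W where "W = {j \<in> {..<n} - T. (j + s) mod n \<in> X}"
  have "card W \<le> card X"
  proof (rule card_inj_on_le)
    show "inj_on (\<lambda>j. (j + s) mod n) W"
      using inj_on_rotate by (rule inj_on_subset) (auto simp: W_def)
  qed (use assms(4) in \<open>auto simp: W_def intro: finite_subset\<close>)
  have fin: "finite U" "finite W" using assms(2,3) by (auto simp: W_def intro: finite_subset)
  have "sum c U = sum ov U" using assms(2) by (intro sum.cong) (auto simp: c_def fix_values_def)
  moreover have "sum c W = (\<Sum>j\<in>W. a ((j + s) mod n))"
    by (intro sum.cong) (auto simp: c_def fix_values_def rotate_profile_def W_def)
  moreover have "\<dots> = (\<Sum>j\<in>{..<n} - T. if (j + s) mod n \<in> X then a ((j + s) mod n) else 0)"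
    unfolding W_def by (rule sum.inter_filter) simp
  ultimately have "sum ov U + (\<Sum>j\<in>{..<n} - T. if (j + s) mod n \<in> X then a ((j + s) mod n) else 0)
      = sum c U + sum c W" by simp
  also have "\<dots> = sum c (U \<union> W)"
    using fin assms(2) by (intro sum.union_disjoint[symmetric]) (auto simp: W_def)
  also have "\<dots> \<le> max_subset_sum k {..<n} c"
  proof (rule sum_le_max_subset_sum)
    show "U \<union> W \<subseteq> {..<n}" using assms(2,3) by (auto simp: W_def)
    show "card (U \<union> W) \<le> k"
      using card_Un_le[of U W] \<open>card W \<le> card X\<close> assms(5) by linarith
    show "\<And>i. i \<in> {..<n} \<Longrightarrow> 0 \<le> c i"
      using ov a by (simp add: c_def fix_values_def rotate_profile_def)
  qed (use assms(1) in simp_all)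
  finally show ?thesis unfolding c_def .
qed

text \<open>Over the n rotations, each of the n - k positions outside T reads every item exactly once,
  so the ads of X are collected n - k times while U is available every time.\<close>

lemma rotation_average_le:
  fixes a ov :: "nat \<Rightarrow> real"
  assumes "k \<le> n" "top_subset k {..<n} ov T"
    and ov: "\<forall>i<n. 0 \<le> ov i" and a: "\<forall>i<n. 0 \<le> a i"
    and "X \<subseteq> {..<n}" "Y \<subseteq> {..<n}" "card X + card Y \<le> k"
  shows "real (n - k) * (sum a X + sum ov Y)
           \<le> (\<Sum>s<n. max_subset_sum k {..<n} (fix_values T ov (rotate_profile n s a)))"
proof -
  have T: "T \<subseteq> {..<n}" "card T = k" using assms(2) by (simp_all add: top_subset_def)
  obtain U where U: "U \<subseteq> T" "card U \<le> card Y" "sum ov Y \<le> sum ov U"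
    using sum_le_sum_top_subset[of "{..<n}" k ov T Y] assms(2,6,7) by auto
  define F where "F i = (if i \<in> X then a i else 0)" for i
  have "(\<Sum>s<n. \<Sum>j\<in>{..<n} - T. F ((j + s) mod n)) = (\<Sum>j\<in>{..<n} - T. \<Sum>s<n. F ((j + s) mod n))"
    by (rule sum.swap)
  also have "\<dots> = real (n - k) * (\<Sum>i<n. F i)"
    using T by (simp add: sum_rotate card_Diff_subset finite_subset)
  also have "(\<Sum>i<n. F i) = sum a X"
    using assms(5) unfolding F_def by (simp add: sum.If_cases Int_absorb1)
  finally have ads: "(\<Sum>s<n. \<Sum>j\<in>{..<n} - T. F ((j + s) mod n)) = real (n - k) * sum a X" .
  have "0 \<le> sum ov Y" using ov assms(6) by (intro sum_nonneg) auto
  then have "real (n - k) * sum ov Y \<le> real n * sum ov U" using U(3) by (intro mult_mono) auto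
  then have "real (n - k) * (sum a X + sum ov Y) \<le> real n * sum ov U + real (n - k) * sum a X"
    by (simp add: algebra_simps)
  also have "\<dots> = (\<Sum>s<n. sum ov U + (\<Sum>j\<in>{..<n} - T. F ((j + s) mod n)))"
    using ads by (simp add: sum.distrib)
  also have "\<dots> \<le> (\<Sum>s<n. max_subset_sum k {..<n} (fix_values T ov (rotate_profile n s a)))"
    unfolding F_def using U T assms ov a
    by (intro sum_mono rotated_allocation_le_max_subset_sum) (auto intro: order_trans)
  finally show ?thesis .
qed

lemma regular_dist_prob_space: "regular_dist G \<Longrightarrow> prob_space G"
  unfolding regular_dist_def by blast

lemma regular_dist_sets: "regular_dist G \<Longrightarrow> sets G = sets borel"
  unfolding regular_dist_def by auto

lemma regular_dist_AE_nonneg: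
  assumes "regular_dist G"
  shows "AE v in G. 0 \<le> v"
proof -
  obtain f S where f: "f \<in> borel_measurable borel" "G = density lborel (\<lambda>v. ennreal (f v))"
    and S: "S \<subseteq> {0..}" "\<forall>v. v \<notin> S \<longrightarrow> f v = 0"
    using assms unfolding regular_dist_def by blast
  have "AE v in lborel. 0 < ennreal (f v) \<longrightarrow> 0 \<le> v" using S by force
  then show ?thesis unfolding f(2) using f(1) by (subst AE_density) auto
qed

lemma AE_profile_nonneg:
  assumes "regular_dist G"
  shows "AE a in profile_measure n G. \<forall>i<n. 0 \<le> a i"
proof -
  have "\<forall>i\<in>{..<n}. AE a in profile_measure n G. 0 \<le> a i"
    unfolding profile_measure_def using assms
    by (auto intro!: AE_PiM_component regular_dist_prob_space regular_dist_AE_nonneg)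
  then have "AE a in profile_measure n G. \<forall>i\<in>{..<n}. 0 \<le> a i" by (rule eventually_ball_finite[rotated]) simp
  then show ?thesis by (rule eventually_mono) simp
qed

lemma measurable_profile_component:
  assumes "sets G = sets borel" "i < n"
  shows "(\<lambda>a. a i) \<in> borel_measurable (profile_measure n G)"
  using measurable_component_singleton[of i "{..<n}" "\<lambda>_. G"] assms
  unfolding profile_measure_def by (simp cong: measurable_cong_sets)

lemma measurable_rotate_profile:
  "rotate_profile n s \<in> measurable (profile_measure n G) (profile_measure n G)"
  unfolding rotate_profile_def profile_measure_def
  by (intro measurable_restrict measurable_component_singleton) simp

lemma distr_rotate_profile:
  assumes "prob_space G"
  shows "distr (profile_measure n G) (profile_measure n G) (rotate_profile n s) = profile_measure n G"
  using distr_PiM_reindex[of "{..<n}" "\<lambda>_. G" "\<lambda>j. (j + s) mod n" "{..<n}"] assms inj_on_rotate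
  unfolding rotate_profile_def profile_measure_def by fastforce

lemma nn_integral_rotate_profile:
  assumes "prob_space G" "f \<in> borel_measurable (profile_measure n G)"
  shows "(\<integral>\<^sup>+ a. f (rotate_profile n s a) \<partial>profile_measure n G) = (\<integral>\<^sup>+ a. f a \<partial>profile_measure n G)"
proof -
  have "f \<in> borel_measurable (distr (profile_measure n G) (profile_measure n G) (rotate_profile n s))"
    using assms by (simp add: distr_rotate_profile)
  from nn_integral_distr[OF measurable_rotate_profile this] show ?thesis
    by (simp add: distr_rotate_profile assms(1))
qed

abbreviation mech_value ::
  "nat \<Rightarrow> (nat \<Rightarrow> real) \<Rightarrow> ((nat \<Rightarrow> real) \<Rightarrow> nat \<Rightarrow> bool) \<Rightarrow> ((nat \<Rightarrow> real) \<Rightarrow> nat \<Rightarrow> bool)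
    \<Rightarrow> (nat \<Rightarrow> real) \<Rightarrow> real" where
  "mech_value n ov x y a \<equiv> \<Sum>i<n. (if x a i then a i else 0) + (if y a i then ov i else 0)"

lemma borel_measurable_mech_value:
  assumes "feasible_mech n k G x y" "sets G = sets borel"
  shows "mech_value n ov x y \<in> borel_measurable (profile_measure n G)"
proof (intro borel_measurable_sum borel_measurable_add measurable_If)
  fix i assume "i \<in> {..<n}"
  then show "{a \<in> space (profile_measure n G). x a i} \<in> sets (profile_measure n G)"
    "{a \<in> space (profile_measure n G). y a i} \<in> sets (profile_measure n G)"
    "(\<lambda>a. a i) \<in> borel_measurable (profile_measure n G)"
    using assms measurable_profile_component by (auto simp: feasible_mech_def)
qed simp_all

lemma mech_value_eq:
  "mech_value n ov x y a = sum a {i\<in>{..<n}. x a i} + sum ov {i\<in>{..<n}. y a i}"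
  using sum.inter_filter[of "{..<n}" a "x a"] sum.inter_filter[of "{..<n}" ov "y a"]
  by (simp add: sum.distrib)

lemma mech_obj_rotation_bound:
  fixes ov :: "nat \<Rightarrow> real"
  assumes G: "regular_dist G" and feas: "feasible_mech n k G x y" and "k \<le> n"
    and T: "top_subset k {..<n} ov T" and ov: "\<forall>i<n. 0 \<le> ov i"
  defines "H \<equiv> \<lambda>a. max_subset_sum k {..<n} (fix_values T ov a)"
  shows "ennreal (real (n - k)) * mech_obj n G ov x y
           \<le> ennreal (real n) * (\<integral>\<^sup>+ a. ennreal (H a) \<partial>profile_measure n G)"
proof -
  let ?P = "profile_measure n G"
  have H_meas: "H \<in> borel_measurable ?P"
  proof -
    have "(\<lambda>a. fix_values T ov a i) \<in> borel_measurable ?P" if "i < n" for i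
      using measurable_profile_component[OF regular_dist_sets[OF G] that]
      by (cases "i \<in> T") (simp_all add: fix_values_def)
    then show ?thesis unfolding H_def
      by (intro borel_measurable_max_subset_sum) auto
  qed
  have H_nonneg: "0 \<le> H b" if "\<forall>i<n. 0 \<le> b i" for b
    using sum_le_max_subset_sum[of "{..<n}" "{}" k] that ov \<open>k \<le> n\<close>
    by (simp add: H_def fix_values_def)
  have "AE a in ?P. ennreal (real (n - k)) * ennreal (mech_value n ov x y a)
                      \<le> (\<Sum>s<n. ennreal (H (rotate_profile n s a)))"
    using AE_profile_nonneg[OF G]
  proof (rule AE_mp, intro AE_I2 impI)
    fix a assume a: "a \<in> space ?P" and a_nonneg: "\<forall>i<n. 0 \<le> a i"
    have rot_nonneg: "\<forall>i<n. 0 \<le> rotate_profile n s a i" for s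
      using a_nonneg by (simp add: rotate_profile_def)
    have "card {i\<in>{..<n}. x a i} + card {i\<in>{..<n}. y a i} \<le> k"
      using feas a by (simp add: feasible_mech_def profile_measure_def space_PiM regular_dist_sets[OF G] sets_eq_imp_space_eq)
    then have "real (n - k) * mech_value n ov x y a \<le> (\<Sum>s<n. H (rotate_profile n s a))"
      unfolding mech_value_eq H_def using assms(3) T ov a_nonneg
      by (intro rotation_average_le) auto
    then show "ennreal (real (n - k)) * ennreal (mech_value n ov x y a)
                 \<le> (\<Sum>s<n. ennreal (H (rotate_profile n s a)))"
      using H_nonneg rot_nonneg by (simp add: ennreal_mult'[symmetric] ennreal_leI)
  qed
  then have "ennreal (real (n - k)) * mech_obj n G ov x y
               \<le> (\<integral>\<^sup>+ a. (\<Sum>s<n. ennreal (H (rotate_profile n s a))) \<partial>?P)"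
    unfolding mech_obj_def
    using borel_measurable_mech_value[OF feas regular_dist_sets[OF G]]
    by (simp add: nn_integral_cmult[symmetric] nn_integral_mono_AE)
  also have "\<dots> = (\<Sum>s<n. \<integral>\<^sup>+ a. ennreal (H (rotate_profile n s a)) \<partial>?P)"
    using measurable_comp[OF measurable_rotate_profile H_meas] by (intro nn_integral_sum) (simp add: comp_def)
  also have "\<dots> = ennreal (real n) * (\<integral>\<^sup>+ a. ennreal (H a) \<partial>?P)"
    using nn_integral_rotate_profile[OF regular_dist_prob_space[OF G], of "\<lambda>a. ennreal (H a)"] H_meas
    by (simp add: ennreal_of_nat_eq_real_of_nat)
  finally show ?thesis .
qed

lemma nn_integral_max_subset_sum_le_fix_obj:
  assumes "k \<le> n"
  shows "(\<integral>\<^sup>+ a. ennreal (max_subset_sum k {..<n} (fix_values T ov a)) \<partial>profile_measure n G)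
           \<le> fix_obj n k G ov T"
  unfolding fix_obj_def fix_values_def using assms
  by (intro nn_integral_mono ennreal_leI max_subset_sum_le_max_k) simp_all

lemma mech_obj_le_fix_obj:
  fixes ov :: "nat \<Rightarrow> real"
  assumes G: "regular_dist G" and feas: "feasible_mech n k G x y" and "k \<le> n" "0 < n"
    and T: "top_subset k {..<n} ov T" and ov: "\<forall>i<n. 0 \<le> ov i"
  shows "ennreal (real (n - k) / real n) * mech_obj n G ov x y \<le> fix_obj n k G ov T"
proof -
  let ?I = "\<integral>\<^sup>+ a. ennreal (max_subset_sum k {..<n} (fix_values T ov a)) \<partial>profile_measure n G"
  have "ennreal (1 / real n) * ennreal (real (n - k)) = ennreal (real (n - k) / real n)"
    by (simp add: ennreal_mult[symmetric])
  then have "ennreal (real (n - k) / real n) * mech_obj n G ov x y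
          = ennreal (1 / real n) * (ennreal (real (n - k)) * mech_obj n G ov x y)"
    by (simp only: mult.assoc[symmetric])
  also have "\<dots> \<le> ennreal (1 / real n) * (ennreal (real n) * ?I)"
    using mech_obj_rotation_bound[OF G feas \<open>k \<le> n\<close> T ov] by (rule mult_left_mono) simp
  also have "\<dots> = ?I"
    using \<open>0 < n\<close> by (simp add: mult.assoc[symmetric] ennreal_mult'[symmetric])
  also have "\<dots> \<le> fix_obj n k G ov T"
    using \<open>k \<le> n\<close> by (rule nn_integral_max_subset_sum_le_fix_obj)
  finally show ?thesis .
qed

lemma binomial_ratio_le:
  assumes "k \<le> n" "0 < n"
  shows "real ((n - k) choose k) / real (n choose k) \<le> real (n - k) / real n"
proof (cases "k = 0")
  case False
  have "(n - k) choose k \<le> (n - 1) choose k" using False by (intro binomial_right_mono) simp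
  then have "real n * real ((n - k) choose k) \<le> real n * real ((n - 1) choose k)"
    by (intro mult_left_mono) simp_all
  also have "\<dots> = real (n - k) * real (n choose k)"
    using binomial_absorb_comp[of n k] by (metis of_nat_mult)
  finally show ?thesis using assms by (simp add: field_simps)
qed (use assms in simp)

lemma fix_obj_le_gfix_obj:
  assumes "I \<subseteq> {..<n}" "card I \<le> k"
  shows "fix_obj n k G ov I \<le> gfix_obj n k G ov"
  unfolding gfix_obj_def using assms by (intro Max_ge) auto

theorem theorem3:
  fixes n k :: nat and G :: "real measure" and ov :: "nat \<Rightarrow> real"
  assumes "2 * k \<le> n"
    and "regular_dist G"
    and "\<forall>i<n. ov i \<ge> 0"
  shows "\<forall>x y. feasible_mech n k G x y \<longrightarrow>
           ennreal (real ((n - k) choose k) / real (n choose k)) * mech_obj n G ov x y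
             \<le> gfix_obj n k G ov"
proof (intro allI impI)
  fix x y assume feas: "feasible_mech n k G x y"
  show "ennreal (real ((n - k) choose k) / real (n choose k)) * mech_obj n G ov x y \<le> gfix_obj n k G ov"
  proof (cases "n = 0")
    case True
    then show ?thesis by (simp add: mech_obj_def)
  next
    case False
    have "k \<le> n" using assms(1) by simp
    then obtain T where T: "top_subset k {..<n} ov T"
      using ex_top_subset[of "{..<n}" k] by auto
    have "ennreal (real ((n - k) choose k) / real (n choose k)) * mech_obj n G ov x y
            \<le> ennreal (real (n - k) / real n) * mech_obj n G ov x y"
      using binomial_ratio_le[OF \<open>k \<le> n\<close>] False by (intro mult_right_mono ennreal_leI) auto
    also have "\<dots> \<le> fix_obj n k G ov T"
      using mech_obj_le_fix_obj[OF assms(2) feas \<open>k \<le> n\<close> _ T assms(3)] False by simp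
    also have "\<dots> \<le> gfix_obj n k G ov"
      using T by (intro fix_obj_le_gfix_obj) (simp_all add: top_subset_def)
    finally show ?thesis .
  qed
qed

end
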